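(* Let $\mathcal X\subseteq\mathbb R^m$ be nonempty, convex and compact, $F:\mathbb R^m\to\mathbb R^r$ differentiable, $C\in\mathbb R^{r\times n}$ acute with nonzero columns, and $\Theta(x,y)=\frac12\|F(x)-Cy\|^2$. Let $L,\ell>0$ be such that for every $y\in\{0,1\}^n$, $\Theta(\cdot,y)$ is $L$-Lipschitz on $\mathcal X$ with $\|\nabla_x\Theta(x,y)\|\le L$ on $\mathcal X$, and $\nabla_x\Theta(\cdot,y)$ is $\ell$-Lipschitz on $\mathcal X$. Let $\varphi(x)=\max_{y\in\{0,1\}^n}\Theta(x,y)$, $x_0\in\mathcal X$, and $\Delta=\varphi(x_0)-\min_{x\in\mathcal X}\varphi(x)>0$. Given $\epsilon>0$, set $K=\lfloor 64L^2\ell\Delta/\epsilon^4\rfloor$ and $\mu=(\Delta/(L^2\ell(K+1)))^{1/2}$. For $k=0,\dots,K$ let $y_k$ be a maximizer of $\Theta(x_k,\cdot)$ over $\{0,1\}^n$ (computed by an exact oracle) and $x_{k+1}=\operatorname{Proj}_{\mathcal X}(x_k-\mu\nabla_x\Theta(x_k,y_k))$. Let $\hat x$ be chosen uniformly at random from $\{x_0,\dots,x_K\}$. Then $$\mathbb E\big[\|\nabla\varphi_{1/(2\ell)}(\hat x)\|\big]\le\epsilon.$$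
   Context: $C=(c_1,\dots,c_n)$ is acute if $c_i^\top c_j\ge0$ for all $i\ne j$. $\operatorname{Proj}_{\mathcal X}$ is Euclidean projection onto $\mathcal X$. The Moreau envelope of $\varphi$ with parameter $\lambda>0$ is $\varphi_\lambda(x)=\min_{w\in\mathcal X}\{\varphi(w)+\frac1{2\lambda}\|w-x\|^2\}$; under the hypotheses $\varphi$ is $\ell$-weakly convex on $\mathcal X$, so $\varphi_{1/(2\ell)}$ is differentiable. The expectation is over the uniform random choice of $\hat x$. *)

theory Defs
  imports "HOL-Analysis.Analysis" "HOL-Probability.Probability"
begin

definition grad :: "('a::euclidean_space \<Rightarrow> real) \<Rightarrow> 'a \<Rightarrow> 'a" where
  "grad f x = (SOME g. (f has_derivative (\<lambda>h. g \<bullet> h)) (at x))"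

definition binvecs :: "(real^'n) set" where
  "binvecs = {y. \<forall>i. y $ i \<in> {0, 1}}"

definition acute :: "real^'n^'r \<Rightarrow> bool" where
  "acute C \<longleftrightarrow> (\<forall>i j. i \<noteq> j \<longrightarrow> column i C \<bullet> column j C \<ge> 0)"

definition Theta :: "(real^'m \<Rightarrow> real^'r) \<Rightarrow> real^'n^'r \<Rightarrow> real^'m \<Rightarrow> real^'n \<Rightarrow> real" where
  "Theta F C x y = (1/2) * (norm (F x - C *v y))^2"

definition phi :: "(real^'m \<Rightarrow> real^'r) \<Rightarrow> real^'n^'r \<Rightarrow> real^'m \<Rightarrow> real" where
  "phi F C x = Max ((\<lambda>y. Theta F C x y) ` binvecs)"

definition moreau :: "('a::real_normed_vector \<Rightarrow> real) \<Rightarrow> 'a set \<Rightarrow> real \<Rightarrow> 'a \<Rightarrow> real" where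
  "moreau f X lam x = (INF w\<in>X. f w + 1 / (2 * lam) * (norm (w - x))^2)"

end

theory Submission
  imports Defs
begin

text \<open>
  The objective \<open>\<phi>\<close> is a maximum of finitely many functions with \<open>\<ell>\<close>-Lipschitz gradients,
  so it is \<open>\<ell>\<close>-weakly convex, and the gradient of the active piece at \<open>x\<^sub>k\<close> is an
  \<open>\<ell>\<close>-weak subgradient of \<open>\<phi>\<close> there. The Moreau envelope \<open>M\<close> of \<open>\<phi>\<close> with parameter
  \<open>1/(2\<ell>)\<close> is differentiable with \<open>\<nabla>M(x) = 2\<ell>(x - p)\<close>, where \<open>p\<close> is the proximal point of
  \<open>x\<close>, and serves as a potential (Davis--Drusvyatskiy): testing the proximal problem at
  \<open>x\<^sub>k\<^sub>+\<^sub>1\<close> with the proximal point of \<open>x\<^sub>k\<close> shows that one projected subgradient step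
  decreases \<open>M\<close> by at least \<open>\<mu>/2 \<parallel>\<nabla>M(x\<^sub>k)\<parallel>\<^sup>2 - \<ell>\<mu>\<^sup>2L\<^sup>2\<close>. Over the \<open>K + 1\<close> steps the
  telescoped decrease is at most \<open>\<Delta>\<close>, and the choice of \<open>\<mu>\<close> makes the accumulated error
  equal to \<open>\<Delta>\<close>; hence the mean of \<open>\<parallel>\<nabla>M(x\<^sub>k)\<parallel>\<^sup>2\<close> is at most \<open>4\<Delta>/(\<mu>(K + 1)) \<le> \<epsilon>\<^sup>2\<close>,
  and Cauchy--Schwarz bounds the expectation of \<open>\<parallel>\<nabla>M(x\<^sub>k)\<parallel>\<close> by \<open>\<epsilon>\<close>.
\<close>

section \<open>Gradients and weak convexity\<close>

lemma grad_has_derivative: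
  fixes f :: "'a::euclidean_space \<Rightarrow> real"
  assumes "f differentiable (at x)"
  shows "(f has_derivative (\<lambda>h. grad f x \<bullet> h)) (at x)"
proof -
  obtain D where D: "(f has_derivative D) (at x)"
    using assms by (auto simp: differentiable_def)
  have "D = (\<lambda>h. adjoint D 1 \<bullet> h)"
    using adjoint_works[OF has_derivative_linear[OF D], of _ 1] by (auto simp: inner_commute)
  with D have "(f has_derivative (\<lambda>h. adjoint D 1 \<bullet> h)) (at x)" by simp
  then have "\<exists>g. (f has_derivative (\<lambda>h. g \<bullet> h)) (at x)" by blast
  then show ?thesis unfolding grad_def by (rule someI_ex)
qed

lemma grad_eqI:
  fixes f :: "'a::euclidean_space \<Rightarrow> real"
  assumes "(f has_derivative (\<lambda>h. v \<bullet> h)) (at x)"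
  shows "grad f x = v"
proof -
  have "f differentiable (at x)" using assms by (auto simp: differentiable_def)
  then have "(\<lambda>h. grad f x \<bullet> h) = (\<lambda>h. v \<bullet> h)"
    using has_derivative_unique[OF grad_has_derivative assms] by blast
  then have "(grad f x - v) \<bullet> (grad f x - v) = 0"
    by (metis inner_diff_left right_minus_eq)
  then show ?thesis by simp
qed

definition weak_subgradient :: "real \<Rightarrow> 'a::real_inner set \<Rightarrow> ('a \<Rightarrow> real) \<Rightarrow> 'a \<Rightarrow> 'a \<Rightarrow> bool" where
  "weak_subgradient ell X f x v \<longleftrightarrow>
     (\<forall>w\<in>X. f x + v \<bullet> (w - x) - ell / 2 * norm (w - x)^2 \<le> f w)"

definition weakly_convex_on :: "real \<Rightarrow> 'a::real_inner set \<Rightarrow> ('a \<Rightarrow> real) \<Rightarrow> bool" where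
  "weakly_convex_on ell X f \<longleftrightarrow> convex_on X (\<lambda>z. f z + ell / 2 * norm z^2)"

lemma weak_subgradient_grad:
  fixes f :: "'a::euclidean_space \<Rightarrow> real"
  assumes X: "convex X" and f_diff: "\<forall>z\<in>X. f differentiable (at z)"
    and lip: "ell-lipschitz_on X (grad f)" and u: "u \<in> X"
  shows "weak_subgradient ell X f u (grad f u)"
  unfolding weak_subgradient_def
proof
  fix v assume v: "v \<in> X"
  define d where "d = v - u"
  define h where "h t = f (u + t *\<^sub>R d) - t * (grad f u \<bullet> d) + ell/2 * t^2 * norm d^2" for t
  have "h 0 \<le> h 1"
  proof (rule DERIV_nonneg_imp_nondecreasing[of 0 1 h])
    fix t :: real assume t: "0 \<le> t" "t \<le> 1"
    define z where "z = u + t *\<^sub>R d"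
    have z: "z \<in> X"
      using convexD[OF X u v, of "1 - t" t] t by (simp add: z_def d_def algebra_simps)
    have "((\<lambda>t. u + t *\<^sub>R d) has_derivative (\<lambda>s. s *\<^sub>R d)) (at t)"
      by (auto intro!: derivative_eq_intros)
    moreover have "f differentiable (at (u + t *\<^sub>R d))" using f_diff z by (simp add: z_def)
    ultimately have "((\<lambda>t. f (u + t *\<^sub>R d)) has_derivative (\<lambda>s. grad f z \<bullet> (s *\<^sub>R d))) (at t)"
      using has_derivative_compose grad_has_derivative by (fastforce simp: z_def)
    then have "((\<lambda>t. f (u + t *\<^sub>R d)) has_real_derivative grad f z \<bullet> d) (at t)"
      by (rule has_derivative_imp_has_field_derivative) simp
    then have "(h has_real_derivative grad f z \<bullet> d - grad f u \<bullet> d + ell * t * norm d^2) (at t)"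
      unfolding h_def[abs_def] by (auto intro!: derivative_eq_intros)
    moreover have "0 \<le> grad f z \<bullet> d - grad f u \<bullet> d + ell * t * norm d^2"
    proof -
      have "norm (grad f z - grad f u) \<le> ell * (t * norm d)"
        using lipschitz_onD[OF lip z u] t by (simp add: dist_norm z_def)
      then have "\<bar>(grad f z - grad f u) \<bullet> d\<bar> \<le> ell * (t * norm d) * norm d"
        using Cauchy_Schwarz_ineq2 mult_right_mono norm_ge_zero order_trans by metis
      then show ?thesis by (simp add: inner_diff_left power2_eq_square abs_le_iff mult.assoc)
    qed
    ultimately show "\<exists>y. (h has_real_derivative y) (at t) \<and> 0 \<le> y" by blast
  qed simp
  then show "f u + grad f u \<bullet> (v - u) - ell / 2 * norm (v - u)^2 \<le> f v"
    by (simp add: h_def d_def)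
qed

lemma weak_subgradient_minorant:
  assumes "weak_subgradient ell X g x v" "\<forall>w\<in>X. g w \<le> f w" "g x = f x"
  shows "weak_subgradient ell X f x v"
  using assms by (fastforce simp: weak_subgradient_def)

lemma norm_convex_combination_sq:
  fixes u v :: "'a::real_inner"
  shows "norm ((1 - t) *\<^sub>R u + t *\<^sub>R v)^2 = (1 - t) * norm u^2 + t * norm v^2 - t * (1 - t) * norm (v - u)^2"
  by (simp add: power2_norm_eq_inner inner_add_left inner_add_right inner_diff_left inner_diff_right
      inner_commute algebra_simps)

lemma power2_norm_diff:
  fixes u h :: "'a::real_inner"
  shows "norm (u - h)^2 = norm u^2 - 2 * (u \<bullet> h) + norm h^2"
  by (simp add: power2_norm_eq_inner inner_diff_left inner_diff_right inner_commute)

lemma weakly_convex_onI_weak_subgradient: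
  assumes X: "convex X" and sub: "\<And>z. z \<in> X \<Longrightarrow> \<exists>v. weak_subgradient ell X f z v"
  shows "weakly_convex_on ell X f"
  unfolding weakly_convex_on_def
proof (rule convex_onI[OF _ X])
  fix t :: real and u w assume t: "0 < t" "t < 1" and u: "u \<in> X" and w: "w \<in> X"
  define z where "z = (1 - t) *\<^sub>R u + t *\<^sub>R w"
  define n where "n = norm (w - u)^2"
  have z: "z \<in> X" using convexD[OF X u w, of "1 - t" t] t by (simp add: z_def)
  obtain v where v: "weak_subgradient ell X f z v" using sub[OF z] by blast
  have "u - z = (- t) *\<^sub>R (w - u)" "w - z = (1 - t) *\<^sub>R (w - u)"
    by (simp_all add: z_def algebra_simps)
  then have sub_u: "f z - t * (v \<bullet> (w - u)) - ell / 2 * t^2 * n \<le> f u"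
    and sub_w: "f z + (1 - t) * (v \<bullet> (w - u)) - ell / 2 * (1 - t)^2 * n \<le> f w"
    using v u w by (auto simp: weak_subgradient_def n_def power_mult_distrib)
  have "f z - ell / 2 * t * (1 - t) * n
      = (1 - t) * (f z - t * (v \<bullet> (w - u)) - ell / 2 * t^2 * n)
        + t * (f z + (1 - t) * (v \<bullet> (w - u)) - ell / 2 * (1 - t)^2 * n)"
    by (simp add: field_simps power2_eq_square)
  also have "\<dots> \<le> (1 - t) * f u + t * f w"
    using sub_u sub_w t by (intro add_mono mult_left_mono) auto
  finally have "f z - ell / 2 * t * (1 - t) * n \<le> (1 - t) * f u + t * f w" .
  then show "f z + ell / 2 * norm z^2 \<le> (1 - t) * (f u + ell / 2 * norm u^2) + t * (f w + ell / 2 * norm w^2)"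
    unfolding z_def norm_convex_combination_sq n_def by (simp add: field_simps)
qed

lemma weakly_convex_onD:
  assumes "weakly_convex_on ell X f" "u \<in> X" "w \<in> X" "0 \<le> t" "t \<le> 1"
  shows "f ((1 - t) *\<^sub>R u + t *\<^sub>R w) \<le> (1 - t) * f u + t * f w + ell / 2 * t * (1 - t) * norm (w - u)^2"
  using convex_onD[OF assms(1)[unfolded weakly_convex_on_def] assms(4,5,2,3)]
  unfolding norm_convex_combination_sq by (simp add: field_simps)

section \<open>Proximal points and the Moreau envelope\<close>

definition prox_point :: "('a::real_normed_vector \<Rightarrow> real) \<Rightarrow> 'a set \<Rightarrow> real \<Rightarrow> 'a \<Rightarrow> 'a \<Rightarrow> bool" where
  "prox_point f X lam x p \<longleftrightarrow> p \<in> X \<and>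
     (\<forall>w\<in>X. f p + 1 / (2 * lam) * norm (p - x)^2 \<le> f w + 1 / (2 * lam) * norm (w - x)^2)"

lemma prox_point_exists:
  assumes "compact X" "X \<noteq> {}" "continuous_on X f"
  shows "\<exists>p. prox_point f X lam x p"
proof -
  have "continuous_on X (\<lambda>w. f w + 1 / (2 * lam) * norm (w - x)^2)"
    by (intro continuous_intros assms(3))
  then show ?thesis
    using continuous_attains_inf[OF assms(1,2)] by (auto simp: prox_point_def)
qed

lemma moreau_eq_prox_point:
  assumes "prox_point f X lam x p"
  shows "moreau f X lam x = f p + 1 / (2 * lam) * norm (p - x)^2"
  unfolding moreau_def using assms by (intro cInf_eq_minimum) (auto simp: prox_point_def)

lemma le_of_forall_le_scaled:
  fixes a b :: real
  assumes "\<And>t. 0 < t \<Longrightarrow> t \<le> 1 \<Longrightarrow> (1 - t) * b \<le> a"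
  shows "b \<le> a"
proof (rule tendsto_le[OF trivial_limit_at_right_real])
  show "((\<lambda>t. (1 - t) * b) \<longlongrightarrow> b) (at_right 0)"
    by (auto intro!: tendsto_eq_intros)
  show "\<forall>\<^sub>F t in at_right 0. (1 - t) * b \<le> a"
    using eventually_at_right_real[OF zero_less_one] by eventually_elim (auto intro: assms)
qed simp

lemma prox_point_strong_min:
  assumes wc: "weakly_convex_on ell X f" and X: "convex X"
    and p: "prox_point f X lam x p" and w: "w \<in> X"
  shows "f p + 1 / (2 * lam) * norm (p - x)^2 + (1 / (2 * lam) - ell / 2) * norm (w - p)^2
           \<le> f w + 1 / (2 * lam) * norm (w - x)^2"
proof -
  define r where "r = 1 / (2 * lam)"
  define G where "G v = f v + r * norm (v - x)^2" for v
  define n where "n = norm (w - p)^2"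
  have p_in: "p \<in> X" using p by (simp add: prox_point_def)
  have "(1 - t) * ((r - ell / 2) * n) \<le> G w - G p" if t: "0 < t" "t \<le> 1" for t
  proof -
    define z where "z = (1 - t) *\<^sub>R p + t *\<^sub>R w"
    have f_z: "f z \<le> (1 - t) * f p + t * f w + ell / 2 * t * (1 - t) * n"
      unfolding z_def n_def using weakly_convex_onD[OF wc p_in w] t by simp
    have "z - x = (1 - t) *\<^sub>R (p - x) + t *\<^sub>R (w - x)" by (simp add: z_def algebra_simps)
    then have norm_z: "norm (z - x)^2 = (1 - t) * norm (p - x)^2 + t * norm (w - x)^2 - t * (1 - t) * n"
      by (simp add: norm_convex_combination_sq n_def)
    have "z \<in> X" using convexD[OF X p_in w, of "1 - t" t] t by (simp add: z_def)
    then have "G p \<le> G z" using p by (simp add: prox_point_def G_def r_def)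
    also have "\<dots> \<le> (1 - t) * f p + t * f w + ell / 2 * t * (1 - t) * n
        + r * ((1 - t) * norm (p - x)^2 + t * norm (w - x)^2 - t * (1 - t) * n)"
      unfolding G_def norm_z using f_z by simp
    also have "\<dots> = (1 - t) * G p + t * G w - t * ((1 - t) * ((r - ell / 2) * n))"
      by (simp add: G_def algebra_simps)
    finally have "t * ((1 - t) * ((r - ell / 2) * n)) \<le> t * (G w - G p)"
      by (simp add: algebra_simps)
    then show ?thesis using t by simp
  qed
  then have "(r - ell / 2) * n \<le> G w - G p" by (rule le_of_forall_le_scaled)
  then show ?thesis by (simp add: G_def n_def r_def)
qed

lemma has_derivative_of_quadratic_remainder:
  fixes f :: "'a::real_inner \<Rightarrow> real"
  assumes "\<And>h. \<bar>f (x + h) - f x - v \<bullet> h\<bar> \<le> c * norm h^2"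
  shows "(f has_derivative (\<lambda>h. v \<bullet> h)) (at x)"
proof -
  have "(\<lambda>h. norm (f (x + h) - f x - v \<bullet> h) / norm h) \<midarrow>0\<rightarrow> 0"
  proof (rule Lim_null_comparison)
    show "\<forall>\<^sub>F h in at 0. norm (norm (f (x + h) - f x - v \<bullet> h) / norm h) \<le> c * norm h"
    proof (rule always_eventually, rule allI)
      fix h :: 'a
      show "norm (norm (f (x + h) - f x - v \<bullet> h) / norm h) \<le> c * norm h"
        using assms[of h] by (cases "h = 0") (auto simp: divide_le_eq power2_eq_square mult.assoc)
    qed
    show "((\<lambda>h. c * norm h) \<longlongrightarrow> 0) (at 0)"
      by (auto intro!: tendsto_eq_intros)
  qed
  then show ?thesis
    unfolding has_derivative_at by (simp add: bounded_linear_inner_right)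
qed

lemma moreau_quadratic_remainder:
  assumes wc: "weakly_convex_on ell X f" and X: "convex X"
    and lam: "0 < lam" "lam * ell < 1"
    and prox_ex: "\<And>z. \<exists>q. prox_point f X lam z q" and p: "prox_point f X lam x p"
  defines "r \<equiv> 1 / (2 * lam)"
  shows "\<bar>moreau f X lam (x + h) - moreau f X lam x - ((2 * r) *\<^sub>R (x - p)) \<bullet> h\<bar>
           \<le> (r + r^2 / (r - ell / 2)) * norm h^2"
proof -
  txt \<open>The upper bound tests the proximal problem at \<open>x + h\<close> with \<open>p\<close>; the lower bound uses the
    strong convexity of the proximal problem at \<open>x\<close> and completes the square in \<open>q - p\<close>.\<close>
  define M where "M = moreau f X lam"
  define s where "s = r - ell / 2"
  have r: "r > 0" using lam by (simp add: r_def)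
  have s: "s > 0" using lam by (simp add: s_def r_def field_simps)
  obtain q where q: "prox_point f X lam (x + h) q" using prox_ex by blast
  define a where "a = (p - x) \<bullet> h"
  define b where "b = (q - p) \<bullet> h"
  have M_x: "M x = f p + r * norm (p - x)^2"
    using moreau_eq_prox_point[OF p] by (simp add: M_def r_def)
  have M_q: "M (x + h) = f q + r * norm (q - (x + h))^2"
    using moreau_eq_prox_point[OF q] by (simp add: M_def r_def)
  have M_xh: "M (x + h) = f q + r * norm (q - x)^2 - 2 * r * a - 2 * r * b + r * norm h^2"
  proof -
    have norm_q: "norm (q - (x + h))^2 = norm (q - x)^2 - 2 * (a + b) + norm h^2"
      using power2_norm_diff[of "q - x" h]
      by (simp add: a_def b_def algebra_simps inner_diff_left)
    show ?thesis unfolding M_q norm_q by (simp add: algebra_simps)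
  qed
  have "M (x + h) \<le> f p + r * norm (p - (x + h))^2"
    using q p unfolding M_q prox_point_def r_def by blast
  also have "\<dots> = M x - 2 * r * a + r * norm h^2"
    unfolding power2_norm_diff[of "p - x" h, unfolded diff_diff_eq] M_x a_def
    by (simp add: algebra_simps)
  finally have upper: "M (x + h) \<le> M x - 2 * r * a + r * norm h^2" .
  have strong: "f p + r * norm (p - x)^2 + s * norm (q - p)^2 \<le> f q + r * norm (q - x)^2"
    using prox_point_strong_min[OF wc X p] q by (simp add: prox_point_def r_def s_def)
  have "norm ((q - p) - (r / s) *\<^sub>R h)^2 = norm (q - p)^2 - 2 * (r / s) * b + (r / s)^2 * norm h^2"
    unfolding power2_norm_diff using s r by (simp add: b_def power_mult_distrib power_divide)
  then have "s * norm ((q - p) - (r / s) *\<^sub>R h)^2 = s * norm (q - p)^2 - 2 * r * b + r^2 / s * norm h^2"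
    using s by (simp add: field_simps power2_eq_square)
  moreover have "0 \<le> s * norm ((q - p) - (r / s) *\<^sub>R h)^2" using s by simp
  moreover have "0 \<le> r * norm h^2" "0 \<le> r^2 / s * norm h^2" using r s by simp_all
  ultimately have lower: "M x - 2 * r * a - r^2 / s * norm h^2 \<le> M (x + h)"
    using strong M_x M_xh by linarith
  have "((2 * r) *\<^sub>R (x - p)) \<bullet> h = - 2 * r * a"
    by (simp add: a_def inner_diff_left algebra_simps)
  then show ?thesis
    using upper lower \<open>0 \<le> r * norm h^2\<close> \<open>0 \<le> r^2 / s * norm h^2\<close>
    unfolding M_def[symmetric] s_def[symmetric] by (simp add: abs_le_iff algebra_simps)
qed

lemma has_derivative_moreau:
  assumes "weakly_convex_on ell X f" "convex X" "0 < lam" "lam * ell < 1"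
    and "\<And>z. \<exists>q. prox_point f X lam z q" "prox_point f X lam x p"
  shows "(moreau f X lam has_derivative (\<lambda>h. ((1 / lam) *\<^sub>R (x - p)) \<bullet> h)) (at x)"
  using moreau_quadratic_remainder[OF assms]
  by (intro has_derivative_of_quadratic_remainder) simp

lemma grad_moreau:
  fixes f :: "'a::euclidean_space \<Rightarrow> real"
  assumes "weakly_convex_on ell X f" "convex X" "0 < lam" "lam * ell < 1"
    and "\<And>z. \<exists>q. prox_point f X lam z q" "prox_point f X lam x p"
  shows "grad (moreau f X lam) x = (1 / lam) *\<^sub>R (x - p)"
  by (rule grad_eqI[OF has_derivative_moreau[OF assms]])

lemma moreau_le_self:
  assumes "prox_point f X lam x p" "x \<in> X"
  shows "moreau f X lam x \<le> f x"
  using assms by (auto simp: moreau_eq_prox_point prox_point_def)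

lemma Inf_le_moreau:
  assumes "prox_point f X lam x p" "0 < lam" "bdd_below (f ` X)"
  shows "(INF z\<in>X. f z) \<le> moreau f X lam x"
proof -
  have "(INF z\<in>X. f z) \<le> f p" using assms by (intro cINF_lower) (auto simp: prox_point_def)
  also have "\<dots> \<le> moreau f X lam x" using assms by (simp add: moreau_eq_prox_point)
  finally show ?thesis .
qed

section \<open>The projected subgradient method\<close>

lemma moreau_projected_step:
  fixes f :: "'a::euclidean_space \<Rightarrow> real"
  assumes wc: "weakly_convex_on ell X f" and X: "convex X" "closed X" "X \<noteq> {}"
    and lam: "0 < lam" "lam * ell < 1" and prox_ex: "\<And>z. \<exists>q. prox_point f X lam z q"
    and x: "x \<in> X" and v: "weak_subgradient ell X f x v" "norm v \<le> L" and mu: "0 \<le> \<mu>"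
  shows "moreau f X lam (closest_point X (x - \<mu> *\<^sub>R v))
           \<le> moreau f X lam x - \<mu> * (1 - lam * ell) * norm (grad (moreau f X lam) x)^2
              + \<mu>^2 * L^2 / (2 * lam)"
proof -
  define M where "M = moreau f X lam"
  define r where "r = 1 / (2 * lam)"
  define x' where "x' = closest_point X (x - \<mu> *\<^sub>R v)"
  obtain p where p: "prox_point f X lam x p" using prox_ex by blast
  obtain p' where p': "prox_point f X lam x' p'" using prox_ex by blast
  define D where "D = norm (p - x)^2"
  have p_in: "p \<in> X" using p by (simp add: prox_point_def)
  have r: "r > 0" using lam by (simp add: r_def)
  have M_x: "M x = f p + r * D" using moreau_eq_prox_point[OF p] by (simp add: M_def r_def D_def)
  have grad_sq: "norm (grad M x)^2 = (2 * r)^2 * D"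
    using grad_moreau[OF wc X(1) lam prox_ex p] lam
    by (simp add: M_def r_def D_def power_mult_distrib power_divide norm_minus_commute)
  have "v \<bullet> (p - x) \<le> f p - f x + ell / 2 * D"
    using v(1) p_in by (auto simp: weak_subgradient_def D_def)
  moreover have "f p + r * D + (r - ell / 2) * D \<le> f x"
    using prox_point_strong_min[OF wc X(1) p x] by (simp add: r_def D_def norm_minus_commute)
  ultimately have v_descent: "v \<bullet> (p - x) \<le> - (2 * r - ell) * D" by (simp add: algebra_simps)
  have "norm (p - x') \<le> norm ((p - x) + \<mu> *\<^sub>R v)"
    using closest_point_lipschitz[OF X, of p "x - \<mu> *\<^sub>R v"]
    by (simp add: closest_point_self[OF p_in] x'_def dist_norm algebra_simps)
  then have "norm (p - x')^2 \<le> norm ((p - x) + \<mu> *\<^sub>R v)^2"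
    by (rule power_mono) simp
  also have "\<dots> = D + 2 * \<mu> * (v \<bullet> (p - x)) + \<mu>^2 * norm v^2"
    using power2_norm_diff[of "p - x" "- \<mu> *\<^sub>R v"]
    by (simp add: D_def power_mult_distrib inner_commute)
  also have "\<dots> \<le> D + 2 * \<mu> * (- (2 * r - ell) * D) + \<mu>^2 * L^2"
  proof -
    have "2 * \<mu> * (v \<bullet> (p - x)) \<le> 2 * \<mu> * (- (2 * r - ell) * D)"
      using v_descent mu by (intro mult_left_mono) auto
    moreover have "\<mu>^2 * norm v^2 \<le> \<mu>^2 * L^2"
      using v(2) by (intro mult_left_mono power_mono) auto
    ultimately show ?thesis by linarith
  qed
  finally have "r * norm (p - x')^2 \<le> r * (D + 2 * \<mu> * (- (2 * r - ell) * D) + \<mu>^2 * L^2)"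
    using r by simp
  moreover have "M x' \<le> f p + r * norm (p - x')^2"
    using p' p_in by (auto simp: M_def r_def moreau_eq_prox_point prox_point_def)
  ultimately have "M x' \<le> M x - \<mu> * (2 * r) * (2 * r - ell) * D + \<mu>^2 * L^2 * r"
    unfolding M_x by (simp add: algebra_simps)
  moreover have "\<mu> * (1 - lam * ell) * norm (grad M x)^2 = \<mu> * (2 * r) * (2 * r - ell) * D"
  proof -
    have "(1 - lam * ell) * (2 * r)^2 = 2 * r * (2 * r - ell)"
      using lam by (simp add: r_def field_simps power2_eq_square)
    then show ?thesis unfolding grad_sq by (metis mult.assoc)
  qed
  moreover have "\<mu>^2 * L^2 / (2 * lam) = \<mu>^2 * L^2 * r" by (simp add: r_def)
  ultimately show ?thesis unfolding M_def[symmetric] x'_def[symmetric] by linarith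
qed

lemma projected_iterates_in:
  assumes "closed X" "X \<noteq> {}" "x 0 \<in> X" "\<And>k. k \<le> K \<Longrightarrow> x (Suc k) = closest_point X (g k)"
  shows "k \<le> Suc K \<Longrightarrow> x k \<in> X"
proof (induction k)
  case (Suc k)
  then show ?case using assms(4)[of k] closest_point_in_set[OF assms(1,2)] by simp
qed (use assms(3) in simp)

lemma projected_subgradient_moreau_bound:
  fixes f :: "'a::euclidean_space \<Rightarrow> real"
  assumes wc: "weakly_convex_on ell X f" and X: "convex X" "compact X" "X \<noteq> {}"
    and f_cont: "continuous_on X f" and lam: "0 < lam" "lam * ell < 1" and mu: "0 \<le> \<mu>"
    and x0: "x 0 \<in> X"
    and sub: "\<And>k. k \<le> K \<Longrightarrow> weak_subgradient ell X f (x k) (v k)"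
    and v_bound: "\<And>k. k \<le> K \<Longrightarrow> norm (v k) \<le> L"
    and x_step: "\<And>k. k \<le> K \<Longrightarrow> x (Suc k) = closest_point X (x k - \<mu> *\<^sub>R v k)"
  shows "\<mu> * (1 - lam * ell) * (\<Sum>k\<le>K. norm (grad (moreau f X lam) (x k))^2)
           \<le> f (x 0) - (INF z\<in>X. f z) + (K + 1) * (\<mu>^2 * L^2 / (2 * lam))"
proof -
  define M where "M = moreau f X lam"
  define c where "c = \<mu> * (1 - lam * ell)"
  have prox_ex: "\<exists>q. prox_point f X lam z q" for z
    using prox_point_exists[OF X(2,3) f_cont] .
  have X_closed: "closed X" using X(2) by (rule compact_imp_closed)
  have x_in: "x k \<in> X" if "k \<le> Suc K" for k
    using projected_iterates_in[OF X_closed X(3) x0 x_step that] .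
  have "c * norm (grad M (x k))^2 \<le> M (x k) - M (x (Suc k)) + \<mu>^2 * L^2 / (2 * lam)"
    if "k \<le> K" for k
    using moreau_projected_step[OF wc X(1) X_closed X(3) lam prox_ex x_in sub v_bound mu, of k]
      x_step that by (simp add: M_def c_def)
  then have "(\<Sum>k<Suc K. c * norm (grad M (x k))^2)
      \<le> (\<Sum>k<Suc K. M (x k) - M (x (Suc k)) + \<mu>^2 * L^2 / (2 * lam))"
    by (intro sum_mono) simp
  also have "\<dots> = M (x 0) - M (x (Suc K)) + (K + 1) * (\<mu>^2 * L^2 / (2 * lam))"
    unfolding sum.distrib sum_lessThan_telescope'[of "\<lambda>k. M (x k)"] by simp
  also have "\<dots> \<le> f (x 0) - (INF z\<in>X. f z) + (K + 1) * (\<mu>^2 * L^2 / (2 * lam))"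
  proof -
    obtain p where "prox_point f X lam (x 0) p" using prox_ex by blast
    then have "M (x 0) \<le> f (x 0)" using x0 unfolding M_def by (rule moreau_le_self)
    moreover obtain q where "prox_point f X lam (x (Suc K)) q" using prox_ex by blast
    then have "(INF z\<in>X. f z) \<le> M (x (Suc K))"
      unfolding M_def using lam compact_imp_bounded[OF compact_continuous_image[OF f_cont X(2)]]
      by (intro Inf_le_moreau) (auto intro: bounded_imp_bdd_below)
    ultimately show ?thesis by simp
  qed
  finally show ?thesis
    by (simp add: M_def c_def sum_distrib_left lessThan_Suc_atMost add.commute)
qed

section \<open>The maximum over binary vectors\<close>

lemma finite_binvecs: "finite (binvecs :: (real^'n) set)"
proof -
  have "binvecs \<subseteq> (\<lambda>b::'n \<Rightarrow> bool. \<chi> i. if b i then 1 else 0) ` UNIV"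
  proof
    fix y :: "real^'n" assume "y \<in> binvecs"
    then have "y = (\<chi> i. if y $ i = 1 then 1 else 0)" by (auto simp: binvecs_def vec_eq_iff)
    then show "y \<in> (\<lambda>b::'n \<Rightarrow> bool. \<chi> i. if b i then 1 else 0) ` UNIV"
      by (intro image_eqI[where x="\<lambda>i. y $ i = 1"]) auto
  qed
  then show ?thesis by (rule finite_subset) simp
qed

lemma zero_in_binvecs: "0 \<in> binvecs"
  by (simp add: binvecs_def)

lemma Theta_le_phi: "yb \<in> binvecs \<Longrightarrow> Theta F C x yb \<le> phi F C x"
  unfolding phi_def by (rule Max_ge) (auto simp: finite_binvecs)

lemma phi_eq_Theta_maximizer:
  assumes "yb \<in> binvecs" "\<forall>y'\<in>binvecs. Theta F C x y' \<le> Theta F C x yb"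
  shows "phi F C x = Theta F C x yb"
  unfolding phi_def using assms by (intro Max_eqI) (auto simp: finite_binvecs)

lemma phi_attained: "\<exists>yb\<in>binvecs. phi F C x = Theta F C x yb"
proof -
  have "phi F C x \<in> (\<lambda>y. Theta F C x y) ` binvecs"
    unfolding phi_def by (rule Max_in) (use finite_binvecs zero_in_binvecs in auto)
  then show ?thesis by auto
qed

lemma Theta_differentiable:
  assumes "\<forall>z. F differentiable (at z)"
  shows "(\<lambda>w. Theta F C w yb) differentiable (at z)"
proof -
  have "(\<lambda>w. Theta F C w yb) = (\<lambda>w. (1/2) * ((F w - C *v yb) \<bullet> (F w - C *v yb)))"
    by (simp add: Theta_def power2_norm_eq_inner)
  then show ?thesis using assms
    by (simp add: differentiable_mult differentiable_inner differentiable_diff differentiable_const)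
qed

lemma continuous_on_Max:
  fixes f :: "'s \<Rightarrow> 'a::topological_space \<Rightarrow> real"
  assumes "finite S" "S \<noteq> {}" "\<And>s. s \<in> S \<Longrightarrow> continuous_on A (f s)"
  shows "continuous_on A (\<lambda>x. Max ((\<lambda>s. f s x) ` S))"
  using assms
proof (induction S rule: finite_ne_induct)
  case (insert s S)
  have "(\<lambda>x. Max ((\<lambda>s. f s x) ` insert s S)) = (\<lambda>x. max (f s x) (Max ((\<lambda>s. f s x) ` S)))"
    using insert by (auto simp: fun_eq_iff)
  then show ?case using insert by (auto intro!: continuous_on_max)
qed simp

lemma continuous_on_phi:
  assumes "\<forall>z. F differentiable (at z)"
  shows "continuous_on A (phi F C)"
proof -
  have "continuous_on A (\<lambda>w. Theta F C w yb)" for yb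
    by (intro continuous_at_imp_continuous_on ballI differentiable_imp_continuous_within
        Theta_differentiable[OF assms])
  then show ?thesis
    unfolding phi_def[abs_def] by (intro continuous_on_Max finite_binvecs) (use zero_in_binvecs in auto)
qed

lemma weak_subgradient_phi:
  assumes "\<forall>z. F differentiable (at z)" "convex X"
    and "ell-lipschitz_on X (grad (\<lambda>w. Theta F C w yb))"
    and "yb \<in> binvecs" "z \<in> X" "phi F C z = Theta F C z yb"
  shows "weak_subgradient ell X (phi F C) z (grad (\<lambda>w. Theta F C w yb) z)"
proof (rule weak_subgradient_minorant)
  show "weak_subgradient ell X (\<lambda>w. Theta F C w yb) z (grad (\<lambda>w. Theta F C w yb) z)"
    by (intro weak_subgradient_grad[OF assms(2) _ assms(3,5)] ballI Theta_differentiable[OF assms(1)])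
  show "\<forall>w\<in>X. Theta F C w yb \<le> phi F C w" using Theta_le_phi[OF assms(4)] by blast
qed (use assms(6) in simp)

lemma weakly_convex_phi:
  assumes "\<forall>z. F differentiable (at z)" "convex X"
    and "\<forall>yb\<in>binvecs. ell-lipschitz_on X (grad (\<lambda>w. Theta F C w yb))"
  shows "weakly_convex_on ell X (phi F C)"
proof (rule weakly_convex_onI_weak_subgradient[OF assms(2)])
  fix z assume "z \<in> X"
  obtain yb where "yb \<in> binvecs" "phi F C z = Theta F C z yb" using phi_attained by blast
  then show "\<exists>v. weak_subgradient ell X (phi F C) z v"
    using weak_subgradient_phi assms \<open>z \<in> X\<close> by blast
qed

section \<open>The complexity bound\<close>

lemma expectation_pmf_of_set_le_sqrt_mean_sq:
  fixes f :: "'a \<Rightarrow> real"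
  assumes "finite A" "A \<noteq> {}"
  shows "measure_pmf.expectation (pmf_of_set A) f \<le> sqrt ((\<Sum>a\<in>A. f a ^ 2) / card A)"
proof -
  have N: "real (card A) > 0" using assms by (simp add: card_gt_0_iff)
  have "(\<Sum>a\<in>A. 1 * f a)^2 \<le> (\<Sum>a\<in>A. 1^2) * (\<Sum>a\<in>A. f a ^ 2)"
    by (rule Cauchy_Schwarz_ineq_sum)
  then have "((\<Sum>a\<in>A. f a) / card A)^2 \<le> (\<Sum>a\<in>A. f a ^ 2) / card A"
    using N by (simp add: power_divide field_simps power2_eq_square)
  then show ?thesis
    using assms by (simp add: integral_pmf_of_set real_le_rsqrt)
qed

lemma constant_stepsize_bounds:
  fixes L ell \<Delta> \<epsilon> \<mu> :: real and K :: nat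
  assumes "0 < L" "0 < ell" "0 < \<Delta>" "0 < \<epsilon>"
    and K: "K = nat \<lfloor>64 * L^2 * ell * \<Delta> / \<epsilon>^4\<rfloor>"
    and \<mu>: "\<mu> = sqrt (\<Delta> / (L^2 * ell * (real K + 1)))"
  shows "0 < \<mu>" and "(real K + 1) * (ell * \<mu>^2 * L^2) = \<Delta>"
    and "4 * \<Delta> \<le> \<epsilon>^2 * \<mu> * (real K + 1)"
proof -
  define N where "N = real K + 1"
  define c where "c = L^2 * ell"
  have c: "c > 0" "N > 0" using assms(1,2) by (simp_all add: c_def N_def)
  show "0 < \<mu>" unfolding \<mu> using assms(1-3) by simp
  have \<mu>_sq: "\<mu>^2 = \<Delta> / (c * N)" unfolding \<mu> using assms(3) c by (simp add: c_def N_def)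
  have cN\<mu>: "c * N * \<mu>^2 = \<Delta>" using c by (simp add: \<mu>_sq)
  have "(real K + 1) * (ell * \<mu>^2 * L^2) = c * N * \<mu>^2"
    by (simp add: c_def N_def algebra_simps)
  also have "\<dots> = \<Delta>" by (rule cN\<mu>)
  finally show "(real K + 1) * (ell * \<mu>^2 * L^2) = \<Delta>" .
  have "64 * c * \<Delta> / \<epsilon>^4 < N"
    using assms by (simp add: K N_def c_def) linarith
  then have "64 * c * \<Delta> < N * \<epsilon>^4" using assms(4) by (simp add: divide_less_eq)
  moreover have "0 < c * \<Delta>" using c assms(3) by simp
  ultimately have "16 * c * \<Delta> \<le> N * \<epsilon>^4" by linarith
  then have "16 * \<Delta> \<le> N * \<epsilon>^4 / c" using c by (simp add: pos_le_divide_eq mult_ac)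
  then have "16 * \<Delta> * \<Delta> \<le> (N * \<epsilon>^4 / c) * \<Delta>"
    using assms(3) by (intro mult_right_mono) auto
  then have "(4 * \<Delta>)^2 \<le> (N * \<epsilon>^4 / c) * \<Delta>"
    by (simp add: power2_eq_square)
  also have "\<dots> = \<epsilon>^4 * N^2 * \<mu>^2"
    unfolding cN\<mu>[symmetric] using c by (simp add: field_simps power2_eq_square)
  also have "\<dots> = (\<epsilon>^2 * \<mu> * N)^2" by algebra
  finally have "(4 * \<Delta>)^2 \<le> (\<epsilon>^2 * \<mu> * N)^2" .
  then show "4 * \<Delta> \<le> \<epsilon>^2 * \<mu> * (real K + 1)"
    unfolding N_def[symmetric] by (rule power2_le_imp_le) (use \<open>0 < \<mu>\<close> c in simp)
qed

theorem mainTheorem8: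
  fixes X :: "(real^'m) set"
    and F :: "real^'m \<Rightarrow> real^'r"
    and C :: "real^'n^'r"
    and L ell \<Delta> \<epsilon> \<mu> :: real
    and K :: nat
    and x0 :: "real^'m"
    and x :: "nat \<Rightarrow> real^'m"
    and y :: "nat \<Rightarrow> real^'n"
  assumes X_ne: "X \<noteq> {}" and X_convex: "convex X" and X_compact: "compact X"
    and F_diff: "\<forall>z. F differentiable (at z)"
    and C_acute: "acute C" and C_cols: "\<forall>i. column i C \<noteq> 0"
    and L_pos: "L > 0" and ell_pos: "ell > 0"
    and Theta_lip: "\<forall>yb\<in>binvecs. L-lipschitz_on X (\<lambda>z. Theta F C z yb)"
    and grad_bd: "\<forall>yb\<in>binvecs. \<forall>z\<in>X. norm (grad (\<lambda>w. Theta F C w yb) z) \<le> L"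
    and grad_lip: "\<forall>yb\<in>binvecs. ell-lipschitz_on X (grad (\<lambda>w. Theta F C w yb))"
    and x0_in: "x0 \<in> X"
    and Delta_def: "\<Delta> = phi F C x0 - (INF z\<in>X. phi F C z)"
    and Delta_pos: "\<Delta> > 0"
    and eps_pos: "\<epsilon> > 0"
    and K_def: "K = nat \<lfloor>64 * L^2 * ell * \<Delta> / \<epsilon>^4\<rfloor>"
    and mu_def: "\<mu> = sqrt (\<Delta> / (L^2 * ell * (real K + 1)))"
    and x_init: "x 0 = x0"
    and y_max: "\<forall>k\<le>K. y k \<in> binvecs \<and> (\<forall>yb\<in>binvecs. Theta F C (x k) yb \<le> Theta F C (x k) (y k))"
    and x_step: "\<forall>k\<le>K. x (Suc k) = closest_point X (x k - \<mu> *\<^sub>R grad (\<lambda>w. Theta F C w (y k)) (x k))"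
  shows "measure_pmf.expectation (pmf_of_set {0..K})
           (\<lambda>k. norm (grad (moreau (phi F C) X (1 / (2 * ell))) (x k))) \<le> \<epsilon>"
proof -
  txt \<open>\<open>C_acute\<close> and \<open>C_cols\<close> only make the maximization oracle exact, and \<open>y_max\<close>
    assumes its output directly; \<open>Theta_lip\<close> is superseded by \<open>grad_bd\<close>.\<close>
  let ?M = "moreau (phi F C) X (1 / (2 * ell))"
  let ?g = "\<lambda>k. grad (\<lambda>w. Theta F C w (y k)) (x k)"
  define S where "S = (\<Sum>k\<in>{0..K}. norm (grad ?M (x k))^2)"
  have \<mu>: "0 < \<mu>" "(real K + 1) * (ell * \<mu>^2 * L^2) = \<Delta>" "4 * \<Delta> \<le> \<epsilon>^2 * \<mu> * (real K + 1)"
    using constant_stepsize_bounds[OF L_pos ell_pos Delta_pos eps_pos K_def mu_def] by auto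
  have step: "\<And>k. k \<le> K \<Longrightarrow> x (Suc k) = closest_point X (x k - \<mu> *\<^sub>R ?g k)"
    using x_step by blast
  have x_in: "x k \<in> X" if "k \<le> K" for k
    using projected_iterates_in[where g = "\<lambda>k. x k - \<mu> *\<^sub>R ?g k",
        OF compact_imp_closed[OF X_compact] X_ne _ step] x_init x0_in that
    by simp
  have sub: "weak_subgradient ell X (phi F C) (x k) (?g k)" if "k \<le> K" for k
    using y_max grad_lip x_in that
    by (intro weak_subgradient_phi[OF F_diff X_convex] phi_eq_Theta_maximizer) auto
  have "\<mu> * (1 - 1 / (2 * ell) * ell) * S
      \<le> phi F C (x 0) - (INF z\<in>X. phi F C z) + (real K + 1) * (\<mu>^2 * L^2 / (2 * (1 / (2 * ell))))"
    unfolding S_def atLeast0AtMost using ell_pos \<mu>(1) grad_bd y_max x_in x_init x0_in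
    by (intro projected_subgradient_moreau_bound[where v = ?g,
          OF weakly_convex_phi[OF F_diff X_convex grad_lip] X_convex X_compact X_ne
          continuous_on_phi[OF F_diff] _ _ _ _ sub _ step]) auto
  then have "\<mu> * S \<le> 4 * \<Delta>"
    using \<mu>(2) ell_pos x_init by (simp add: Delta_def algebra_simps)
  then have "\<mu> * S \<le> \<mu> * ((real K + 1) * \<epsilon>^2)"
    using \<mu>(3) by (simp add: mult_ac)
  then have "S / card {0..K} \<le> \<epsilon>^2"
    using \<mu>(1) by (simp add: pos_divide_le_eq add.commute mult.commute)
  then have "sqrt (S / card {0..K}) \<le> \<epsilon>"
    using eps_pos by (intro real_le_lsqrt) auto
  then show ?thesis
    unfolding S_def by (intro order_trans[OF expectation_pmf_of_set_le_sqrt_mean_sq]) auto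
qed

end
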